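(* Let $k\ge 1$ and let $\lambda=(\lambda_1,\ldots,\lambda_k)$ be a partition with at most $k$ nonzero parts (trailing zeros allowed). Define $\mu=(\mu_1,\ldots,\mu_k)$ by $\mu_1=\lambda_1$ and $\mu_i=\min\{\mu_{i-1},\lambda_i+(i-1)\}$ for $1<i\le k$. Then $\mu$ is the unique partition that is maximal for $\lambda$.
   Context: A partition is a weakly decreasing sequence of nonnegative integers; $\mathcal P_k$ denotes the set of partitions of length at most $k$ (length = number of nonzero parts), written as sequences of length $k$. Partitions are identified with their Young diagrams (English convention, $(i,j)$ is the $j$th box of row $i$); $|\lambda|=\sum_i\lambda_i$. For $\lambda,\mu\in\mathcal P_k$ with $\lambda\subseteq\mu$, ${\sf Tab}(\mu/\lambda)$ is the set of fillings of the boxes of the skew shape $\mu/\lambda$ with entries in $\{1,\ldots,k\}$ such that entries strictly increase left to right in each row, strictly increase top to bottom in each column, and every entry in row $i$ is at most $i-1$ (for each $i\in\{1,\ldots,k\}$). A partition $\mu\in\mathcal P_k$ with $\lambda\subseteq\mu$ is called maximal for $\lambda$ if ${\sf Tab}(\mu/\lambda)\neq\emptyset$ and ${\sf Tab}(\nu/\lambda)=\emptyset$ for every $\nu\in\mathcal P_k$ with $\lambda\subseteq\nu$ and $|\nu|>|\mu|$. *)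

theory Defs
  imports Main
begin

text \<open>Partitions in P_k are lists of length k (parts lam!0, ..., lam!(k-1), i.e. row i is lam!(i-1)),
  weakly decreasing, nonnegative integers (nat).\<close>
definition is_partition :: "nat \<Rightarrow> nat list \<Rightarrow> bool" where
  "is_partition k lam \<longleftrightarrow> length lam = k \<and> sorted_wrt (\<ge>) lam"

definition part_size :: "nat list \<Rightarrow> nat" where
  "part_size lam = sum_list lam"

definition part_le :: "nat list \<Rightarrow> nat list \<Rightarrow> bool" where
  "part_le lam mu \<longleftrightarrow> length lam = length mu \<and> (\<forall>i<length lam. lam ! i \<le> mu ! i)"

definition skew_boxes :: "nat list \<Rightarrow> nat list \<Rightarrow> (nat \<times> nat) set" where
  "skew_boxes lam mu = {(i, j). 1 \<le> i \<and> i \<le> length lam \<and> lam ! (i - 1) < j \<and> j \<le> mu ! (i - 1)}"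

text \<open>Tab(mu/lam): fillings with entries in {1..k}, strictly increasing along rows and
  columns, entries in row i at most i-1. Fillings are represented extensionally
  (value 0 outside the skew shape).\<close>
definition Tab :: "nat \<Rightarrow> nat list \<Rightarrow> nat list \<Rightarrow> (nat \<times> nat \<Rightarrow> nat) set" where
  "Tab k lam mu = {T.
     (\<forall>b\<in>skew_boxes lam mu. T b \<in> {1..k}) \<and>
     (\<forall>i j j'. (i, j) \<in> skew_boxes lam mu \<and> (i, j') \<in> skew_boxes lam mu \<and> j < j'
        \<longrightarrow> T (i, j) < T (i, j')) \<and>
     (\<forall>i i' j. (i, j) \<in> skew_boxes lam mu \<and> (i', j) \<in> skew_boxes lam mu \<and> i < i'
        \<longrightarrow> T (i, j) < T (i', j)) \<and>
     (\<forall>i j. (i, j) \<in> skew_boxes lam mu \<longrightarrow> T (i, j) \<le> i - 1) \<and>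
     (\<forall>b. b \<notin> skew_boxes lam mu \<longrightarrow> T b = 0)}"

definition is_maximal :: "nat \<Rightarrow> nat list \<Rightarrow> nat list \<Rightarrow> bool" where
  "is_maximal k lam mu \<longleftrightarrow>
     is_partition k mu \<and> part_le lam mu \<and> Tab k lam mu \<noteq> {} \<and>
     (\<forall>nu. is_partition k nu \<and> part_le lam nu \<and> part_size nu > part_size mu
        \<longrightarrow> Tab k lam nu = {})"

fun mu_at :: "nat list \<Rightarrow> nat \<Rightarrow> nat" where
  "mu_at lam 0 = 0"
| "mu_at lam (Suc 0) = lam ! 0"
| "mu_at lam (Suc (Suc n)) = min (mu_at lam (Suc n)) (lam ! (Suc n) + Suc n)"

definition max_mu :: "nat \<Rightarrow> nat list \<Rightarrow> nat list" where
  "max_mu k lam = map (mu_at lam) [1..<k+1]"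

end

theory Submission
  imports Defs
begin

text \<open>Row \<open>i\<close> of a filling in \<open>Tab(\<nu>/\<lambda>)\<close> carries strictly increasing entries from
  \<open>{1..i-1}\<close>, so it has at most \<open>i-1\<close> boxes: \<open>\<nu>\<^sub>i \<le> \<lambda>\<^sub>i + (i-1)\<close>. Conversely, every partition
  obeying these row bounds admits a filling (the right-justified one). The recursion defining
  \<open>\<mu>\<close> produces the pointwise largest weakly decreasing sequence below these bounds, and a
  pointwise greatest candidate is the unique candidate of maximal size.\<close>

lemma mu_at_Suc: "n \<ge> 1 \<Longrightarrow> mu_at lam (Suc n) = min (mu_at lam n) (lam ! n + n)"
  by (cases n) auto

lemma mu_at_Suc_le: "mu_at lam (Suc n) \<le> lam ! n + n"
  by (cases n) auto

lemma mu_at_antimono: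
  assumes "1 \<le> a" "a \<le> b"
  shows "mu_at lam b \<le> mu_at lam a"
  using assms(2)
proof (induction b rule: dec_induct)
  case (step n)
  then show ?case using mu_at_Suc[of n lam] assms(1) by auto
qed simp

lemma nth_le_mu_at:
  assumes "sorted_wrt (\<ge>) lam" "n < length lam"
  shows "lam ! n \<le> mu_at lam (Suc n)"
  using assms(2)
proof (induction n)
  case (Suc n)
  have "lam ! Suc n \<le> lam ! n"
    using assms(1) Suc.prems by (metis lessI sorted_wrt_nth_less)
  then show ?case using Suc mu_at_Suc[of "Suc n" lam] by auto
qed simp

lemma mu_at_greatest:
  assumes "sorted_wrt (\<ge>) nu" "length nu = k"
    and bound: "\<forall>n<k. nu ! n \<le> lam ! n + n" and "n < k"
  shows "nu ! n \<le> mu_at lam (Suc n)"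
  using assms(4)
proof (induction n)
  case 0
  then show ?case using bound[rule_format, of 0] by simp
next
  case (Suc n)
  have "nu ! Suc n \<le> nu ! n"
    using assms(1,2) Suc.prems by (metis lessI sorted_wrt_nth_less)
  then show ?case using Suc bound mu_at_Suc[of "Suc n" lam] by auto
qed

lemma length_max_mu [simp]: "length (max_mu k lam) = k"
  by (simp add: max_mu_def)

lemma nth_max_mu: "n < k \<Longrightarrow> max_mu k lam ! n = mu_at lam (Suc n)"
  unfolding max_mu_def by (simp del: upt_Suc add: nth_upt)

lemma is_partition_max_mu: "is_partition k (max_mu k lam)"
  unfolding is_partition_def sorted_wrt_iff_nth_less
  by (simp add: nth_max_mu mu_at_antimono)

lemma part_le_max_mu:
  assumes "is_partition k lam"
  shows "part_le lam (max_mu k lam)"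
  using assms nth_le_mu_at unfolding is_partition_def part_le_def by (simp add: nth_max_mu)

lemma max_mu_row_bound: "n < k \<Longrightarrow> max_mu k lam ! n \<le> lam ! n + n"
  by (simp add: nth_max_mu mu_at_Suc_le)

lemma part_le_max_mu_if_row_bound:
  assumes "is_partition k nu" "\<forall>n<k. nu ! n \<le> lam ! n + n"
  shows "part_le nu (max_mu k lam)"
  using assms mu_at_greatest[of nu k lam] unfolding is_partition_def part_le_def
  by (simp add: nth_max_mu)

lemma skew_boxes_row_iff:
  "n < length lam \<Longrightarrow> (Suc n, j) \<in> skew_boxes lam nu \<longleftrightarrow> lam ! n < j \<and> j \<le> nu ! n"
  unfolding skew_boxes_def by auto

lemma Tab_row_bound:
  assumes T: "T \<in> Tab k lam nu" and n: "n < length lam"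
  shows "nu ! n \<le> lam ! n + n"
proof (rule ccontr)
  assume "\<not> ?thesis"
  then have long_row: "lam ! n + n < nu ! n" by simp
  note box = skew_boxes_row_iff[OF n, of _ nu]
  have entry_ge: "m \<le> T (Suc n, lam ! n + m)" if "1 \<le> m" "lam ! n + m \<le> nu ! n" for m
    using that
  proof (induction m rule: dec_induct)
    case base
    then show ?case using T box[of "lam ! n + 1"] unfolding Tab_def by auto
  next
    case (step m)
    have "T (Suc n, lam ! n + m) < T (Suc n, lam ! n + Suc m)"
      using T box[of "lam ! n + m"] box[of "lam ! n + Suc m"] step unfolding Tab_def by auto
    then show ?case using step by auto
  qed
  have "nu ! n - lam ! n \<le> T (Suc n, nu ! n)"
    using entry_ge[of "nu ! n - lam ! n"] long_row by auto
  moreover have "T (Suc n, nu ! n) \<le> n"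
    using T box[of "nu ! n"] long_row unfolding Tab_def by fastforce
  ultimately show False using long_row by linarith
qed

lemma Tab_nonempty_if_row_bound:
  assumes len: "length nu = length lam" and "length lam \<le> k"
    and sorted: "sorted_wrt (\<ge>) nu" and bound: "\<forall>n<length lam. nu ! n \<le> lam ! n + n"
  shows "Tab k lam nu \<noteq> {}"
proof -
  \<comment> \<open>The last box of row \<open>i\<close> gets \<open>i-1\<close>, its left neighbours \<open>i-2, i-3, \<dots>\<close>;
    the row bound keeps the entries positive, and \<open>\<nu>\<close> decreasing makes columns increase.\<close>
  define T where "T = (\<lambda>(i, j). if (i, j) \<in> skew_boxes lam nu then j + i - 1 - nu ! (i - 1) else 0)"
  have box: "(i, j) \<in> skew_boxes lam nu \<longleftrightarrow>
      1 \<le> i \<and> i \<le> length lam \<and> lam ! (i - 1) < j \<and> j \<le> nu ! (i - 1)" for i j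
    unfolding skew_boxes_def by auto
  have entry_pos: "nu ! (i - 1) < j + i - 1" if "(i, j) \<in> skew_boxes lam nu" for i j
    using that box bound[rule_format, of "i - 1"] by fastforce
  have "T \<in> Tab k lam nu"
    unfolding Tab_def
  proof (intro CollectI conjI allI impI ballI)
    fix b assume "b \<in> skew_boxes lam nu"
    then show "T b \<in> {1..k}" using entry_pos box assms(2) unfolding T_def by (cases b) fastforce
  next
    fix i j j' assume "(i, j) \<in> skew_boxes lam nu \<and> (i, j') \<in> skew_boxes lam nu \<and> j < j'"
    then show "T (i, j) < T (i, j')" using entry_pos[of i j] unfolding T_def by auto
  next
    fix i i' j assume boxes: "(i, j) \<in> skew_boxes lam nu \<and> (i', j) \<in> skew_boxes lam nu \<and> i < i'"
    then have "nu ! (i' - 1) \<le> nu ! (i - 1)"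
      using box[of i j] box[of i' j] len sorted by (auto intro: sorted_wrt_nth_less)
    moreover have "T (i, j) = j + i - 1 - nu ! (i - 1)" "T (i', j) = j + i' - 1 - nu ! (i' - 1)"
      using boxes unfolding T_def by auto
    ultimately show "T (i, j) < T (i', j)" using boxes entry_pos[of i j] entry_pos[of i' j] by linarith
  next
    fix i j assume "(i, j) \<in> skew_boxes lam nu"
    then show "T (i, j) \<le> i - 1" using box[of i j] unfolding T_def by auto
  next
    fix b assume "b \<notin> skew_boxes lam nu"
    then show "T b = 0" unfolding T_def by (auto split: prod.splits)
  qed
  then show ?thesis by blast
qed

lemma Tab_nonempty_iff_row_bound:
  assumes "length nu = length lam" "length lam \<le> k" "sorted_wrt (\<ge>) nu"
  shows "Tab k lam nu \<noteq> {} \<longleftrightarrow> (\<forall>n<length lam. nu ! n \<le> lam ! n + n)"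
  using assms Tab_row_bound Tab_nonempty_if_row_bound by blast

lemma part_size_eq_sum_nth: "part_size nu = (\<Sum>i<length nu. nu ! i)"
  unfolding part_size_def by (simp add: sum_list_sum_nth atLeast0LessThan)

lemma part_size_mono: "part_le nu mu \<Longrightarrow> part_size nu \<le> part_size mu"
  unfolding part_le_def part_size_eq_sum_nth by (auto intro: sum_mono)

lemma part_size_strict_mono:
  assumes le: "part_le nu mu" and "nu \<noteq> mu"
  shows "part_size nu < part_size mu"
proof -
  obtain i where i: "i < length nu" "nu ! i \<noteq> mu ! i"
    using le assms(2) nth_equalityI unfolding part_le_def by blast
  have "nu ! i < mu ! i" using le i by (simp add: part_le_def le_neq_implies_less)
  then have "(\<Sum>i<length nu. nu ! i) < (\<Sum>i<length nu. mu ! i)"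
    using le i(1) by (intro sum_strict_mono_ex1) (auto simp: part_le_def)
  then show ?thesis using le unfolding part_le_def part_size_eq_sum_nth by simp
qed

lemma unique_maximal_if_greatest:
  assumes M: "is_partition k M" "part_le lam M" "Tab k lam M \<noteq> {}"
    and greatest: "\<And>nu. is_partition k nu \<Longrightarrow> part_le lam nu \<Longrightarrow> Tab k lam nu \<noteq> {}
      \<Longrightarrow> part_le nu M"
  shows "is_maximal k lam M \<and> (\<forall>nu. is_maximal k lam nu \<longrightarrow> nu = M)"
proof (intro conjI allI impI)
  show "is_maximal k lam M"
    unfolding is_maximal_def using M greatest part_size_mono by (meson not_le)
next
  fix nu assume nu: "is_maximal k lam nu"
  show "nu = M"
  proof (rule ccontr)
    assume "nu \<noteq> M"
    then have "part_size nu < part_size M"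
      using nu greatest part_size_strict_mono unfolding is_maximal_def by blast
    then show False using nu M unfolding is_maximal_def by blast
  qed
qed

theorem lemma3p4:
  fixes k :: nat and lam :: "nat list"
  assumes "k \<ge> 1" and "is_partition k lam"
  shows "is_maximal k lam (max_mu k lam) \<and>
         (\<forall>nu. is_maximal k lam nu \<longrightarrow> nu = max_mu k lam)"
proof (rule unique_maximal_if_greatest)
  have len: "length lam = k" using assms(2) by (simp add: is_partition_def)
  note Tab_iff = Tab_nonempty_iff_row_bound[of _ lam k, unfolded len]
  show "is_partition k (max_mu k lam)" by (rule is_partition_max_mu)
  show "part_le lam (max_mu k lam)" using assms(2) by (rule part_le_max_mu)
  show "Tab k lam (max_mu k lam) \<noteq> {}"
    using Tab_iff is_partition_max_mu max_mu_row_bound by (simp add: is_partition_def)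
  show "part_le nu (max_mu k lam)"
    if "is_partition k nu" "Tab k lam nu \<noteq> {}" for nu
  proof (rule part_le_max_mu_if_row_bound)
    show "is_partition k nu" by fact
    then show "\<forall>n<k. nu ! n \<le> lam ! n + n"
      using that(2) Tab_iff by (simp add: is_partition_def)
  qed
qed

end
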